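(* Let $\mathcal{L}:\mathcal{M}_d\to\mathcal{M}_d$ be a unital, reversible Liouvillian with an almost commuting unitary eigenbasis $\{U_i\}_{i\in G}$ associated to a finite abelian group $G$, with $\mathcal{L}(U_i)=\lambda_iU_i$, and let $P_t:V(G)\to V(G)$ be the associated classical semigroup $P_tf=\sum_{i\in G}e^{\lambda_it}\hat f(i)\chi_i$. Then for all $t\geq 0$, $$\|e^{t\mathcal{L}}\|_{2\to4,\frac{\mathbb{1}}{d}}\leq\|P_t\|_{2\to4}.$$
   Context: A Liouvillian generates a semigroup $e^{t\mathcal{L}}$ of completely positive trace-preserving maps; unital: $\mathcal{L}(\mathbb{1})=0$; reversible: $\mathcal{L}=\mathcal{L}^*$ (Hilbert–Schmidt adjoint), so the $\lambda_i$ are real. Almost commuting unitary basis associated to a finite abelian group $G$ with $|G|=d^2$: unitaries $\{U_i\}_{i\in G}\subset\mathcal{M}_d$ with $U_0=\mathbb{1}_d$, $\text{tr}(U_i^\dagger U_j)=d\delta_{ij}$, and for all $i,j$ there are phases $|\phi(i,j)|=|\phi'(i,j)|=1$ with $U_iU_j=\phi(i,j)U_jU_i$ and $U_iU_j=\phi'(i,j)U_{i+j}$. Fix a group isomorphism $i\mapsto\chi_i$ from $G$ to its character group $\hat G$. $V(G)$ is the space of functions $G\to\mathbb{C}$ with $\|f\|_p^p=\frac{1}{|G|}\sum_g|f(g)|^p$, inner product $\langle f,h\rangle=\frac1{|G|}\sum_g\overline{f(g)}h(g)$, $\hat f(i)=\langle\chi_i,f\rangle$, and $\|A\|_{2\to4}=\sup_{f\neq0}\|Af\|_4/\|f\|_2$.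 On $\mathcal{M}_d$: $\|Y\|_{p,\frac{\mathbb{1}}{d}}=d^{-1/p}(\text{tr}|Y|^p)^{1/p}$, $\|S\|_{2\to4,\frac{\mathbb{1}}{d}}=\sup_{X\neq0}\|S(X)\|_{4,\frac{\mathbb{1}}{d}}/\|X\|_{2,\frac{\mathbb{1}}{d}}$. *)

theory Defs
  imports "HOL-Analysis.Analysis"
begin

type_synonym 'n mat = "complex^'n^'n"

definition cscale :: "complex \<Rightarrow> 'n::finite mat \<Rightarrow> 'n mat" (infixr "*c" 75) where
  "c *c X = (\<chi> i j. c * X$i$j)"

definition adj :: "'n::finite mat \<Rightarrow> 'n mat" where
  "adj X = (\<chi> i j. cnj (X$j$i))"

definition hs_inner :: "'n::finite mat \<Rightarrow> 'n mat \<Rightarrow> complex" where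
  "hs_inner A B = trace (adj A ** B)"

definition complex_linear_map :: "('n::finite mat \<Rightarrow> 'n mat) \<Rightarrow> bool" where
  "complex_linear_map T \<longleftrightarrow> (\<forall>X Y. T (X + Y) = T X + T Y) \<and> (\<forall>c X. T (c *c X) = c *c T X)"

definition semigroup :: "('n::finite mat \<Rightarrow> 'n mat) \<Rightarrow> real \<Rightarrow> 'n mat \<Rightarrow> 'n mat" where
  "semigroup L t X = (\<Sum>n. (t ^ n / fact n) *\<^sub>R (L ^^ n) X)"

text \<open>Positivity of a k x k block matrix with blocks in M_d, i.e. of an operator on C^k (x) C^d:
  its quadratic form is real and nonnegative.\<close>
definition psd_block :: "nat \<Rightarrow> (nat \<Rightarrow> nat \<Rightarrow> 'n::finite mat) \<Rightarrow> bool" where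
  "psd_block k X \<longleftrightarrow> (\<forall>v :: nat \<Rightarrow> complex^'n.
     (let q = (\<Sum>a<k. \<Sum>b<k. \<Sum>i\<in>UNIV. \<Sum>j\<in>UNIV. cnj (v a $ i) * X a b $ i $ j * v b $ j)
      in Im q = 0 \<and> Re q \<ge> 0))"

definition completely_positive :: "('n::finite mat \<Rightarrow> 'n mat) \<Rightarrow> bool" where
  "completely_positive T \<longleftrightarrow> (\<forall>k X. psd_block k X \<longrightarrow> psd_block k (\<lambda>a b. T (X a b)))"

definition trace_preserving :: "('n::finite mat \<Rightarrow> 'n mat) \<Rightarrow> bool" where
  "trace_preserving T \<longleftrightarrow> (\<forall>X. trace (T X) = trace X)"

definition liouvillian :: "('n::finite mat \<Rightarrow> 'n mat) \<Rightarrow> bool" where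
  "liouvillian L \<longleftrightarrow> complex_linear_map L \<and>
     (\<forall>t\<ge>0. completely_positive (semigroup L t) \<and> trace_preserving (semigroup L t))"

definition unital :: "('n::finite mat \<Rightarrow> 'n mat) \<Rightarrow> bool" where
  "unital L \<longleftrightarrow> L (mat 1) = 0"

definition reversible :: "('n::finite mat \<Rightarrow> 'n mat) \<Rightarrow> bool" where
  "reversible L \<longleftrightarrow> (\<forall>A B. hs_inner A (L B) = hs_inner (L A) B)"

definition unitary_mat :: "'n::finite mat \<Rightarrow> bool" where
  "unitary_mat U \<longleftrightarrow> adj U ** U = mat 1 \<and> U ** adj U = mat 1"

definition acu_basis :: "('g::{finite,ab_group_add} \<Rightarrow> 'n::finite mat) \<Rightarrow> bool" where
  "acu_basis U \<longleftrightarrow> CARD('g) = CARD('n)^2 \<and> U 0 = mat 1 \<and> (\<forall>i. unitary_mat (U i)) \<and>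
     (\<forall>i j. trace (adj (U i) ** U j) = (if i = j then of_nat CARD('n) else 0)) \<and>
     (\<forall>i j. \<exists>\<phi>. cmod \<phi> = 1 \<and> U i ** U j = \<phi> *c (U j ** U i)) \<and>
     (\<forall>i j. \<exists>\<phi>'. cmod \<phi>' = 1 \<and> U i ** U j = \<phi>' *c U (i + j))"

definition character :: "('g::ab_group_add \<Rightarrow> complex) \<Rightarrow> bool" where
  "character \<psi> \<longleftrightarrow> (\<forall>a b. \<psi> (a + b) = \<psi> a * \<psi> b) \<and> (\<forall>a. \<psi> a \<noteq> 0)"

definition char_iso :: "('g::{finite,ab_group_add} \<Rightarrow> 'g \<Rightarrow> complex) \<Rightarrow> bool" where
  "char_iso chi \<longleftrightarrow> (\<forall>i. character (chi i)) \<and> (\<forall>i j. chi (i + j) = (\<lambda>g. chi i g * chi j g)) \<and>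
     (\<forall>\<psi>. character \<psi> \<longrightarrow> (\<exists>!i. chi i = \<psi>))"

definition vnorm :: "real \<Rightarrow> ('g::finite \<Rightarrow> complex) \<Rightarrow> real" where
  "vnorm p f = ((1 / real CARD('g)) * (\<Sum>g\<in>UNIV. cmod (f g) powr p)) powr (1 / p)"

definition vinner :: "('g::finite \<Rightarrow> complex) \<Rightarrow> ('g \<Rightarrow> complex) \<Rightarrow> complex" where
  "vinner f h = (1 / of_nat CARD('g)) * (\<Sum>g\<in>UNIV. cnj (f g) * h g)"

definition fourier :: "('g::finite \<Rightarrow> 'g \<Rightarrow> complex) \<Rightarrow> ('g \<Rightarrow> complex) \<Rightarrow> 'g \<Rightarrow> complex" where
  "fourier chi f i = vinner (chi i) f"

definition classical_semigroup ::
  "('g::finite \<Rightarrow> 'g \<Rightarrow> complex) \<Rightarrow> ('g \<Rightarrow> complex) \<Rightarrow> real \<Rightarrow> ('g \<Rightarrow> complex) \<Rightarrow> 'g \<Rightarrow> complex" where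
  "classical_semigroup chi lam t f = (\<lambda>g. \<Sum>i\<in>UNIV. exp (lam i * of_real t) * fourier chi f i * chi i g)"

definition norm_2_4_V :: "(('g::finite \<Rightarrow> complex) \<Rightarrow> ('g \<Rightarrow> complex)) \<Rightarrow> real" where
  "norm_2_4_V A = (SUP f \<in> {f. \<exists>g. f g \<noteq> 0}. vnorm 4 (A f) / vnorm 2 f)"

text \<open>Normalized Schatten norm ||Y||_{p,1/d} = d^{-1/p} (tr |Y|^p)^{1/p} for even p = 2k,
  where |Y|^{2k} = (Y^* Y)^k.\<close>
definition mat_pow :: "'n::finite mat \<Rightarrow> nat \<Rightarrow> 'n mat" where
  "mat_pow A k = ((\<lambda>B. B ** A) ^^ k) (mat 1)"

definition schatten_norm_even :: "nat \<Rightarrow> 'n::finite mat \<Rightarrow> real" where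
  "schatten_norm_even k Y = real CARD('n) powr (- 1 / real (2 * k)) *
     (Re (trace (mat_pow (adj Y ** Y) k))) powr (1 / real (2 * k))"

definition norm_2_4_mat :: "('n::finite mat \<Rightarrow> 'n mat) \<Rightarrow> real" where
  "norm_2_4_mat S = (SUP X \<in> {X. X \<noteq> 0}. schatten_norm_even 2 (S X) / schatten_norm_even 1 X)"

end

theory Submission
  imports Defs
begin

(* Expand X = sum_i x_i U_i in the unitary basis. Orthogonality gives ||X||_{2,1/d} = ||x||_2, and
   since U_b U_c^* U_e is a unimodular multiple of U_(b-c+e), expanding tr((Y^* Y)^2) and bounding
   each term by its modulus gives ||Y||_{4,1/d}^4 <= sum_{a+c=b+e} |y_a| |y_b| |y_c| |y_e|, the
   additive energy of |y|. By orthogonality of characters this energy is exactly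
   ||sum_i |y_i| chi_i||_4^4, while ||sum_i |x_i| chi_i||_2 = ||x||_2. Reversibility makes the
   eigenvalues real, so e^{tL} and P_t multiply the coefficients by the same positive factors
   e^{lam_i t}; hence the ratio defining the quantum norm at X is at most the classical ratio at
   f = sum_i |x_i| chi_i. *)

lemma cscale_nth [simp]: "(c *c X) $ i $ j = c * X $ i $ j"
  by (simp add: cscale_def)

lemma adj_nth [simp]: "adj X $ i $ j = cnj (X $ j $ i)"
  by (simp add: adj_def)

lemma cscale_cscale: "a *c (b *c A) = (a * b) *c A"
  by (simp add: vec_eq_iff mult.assoc)

lemma cscale_one [simp]: "1 *c A = A"
  by (simp add: vec_eq_iff)

lemma cscale_zero [simp]: "0 *c A = 0" "c *c 0 = 0"
  by (simp_all add: vec_eq_iff)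

lemma cscale_add: "c *c (A + B) = c *c A + c *c B"
  by (simp add: vec_eq_iff algebra_simps)

lemma cscale_sum: "c *c (\<Sum>i\<in>S. A i) = (\<Sum>i\<in>S. c *c A i)"
  by (induct S rule: infinite_finite_induct) (simp_all add: cscale_add)

lemma scaleR_eq_cscale: "r *\<^sub>R (A::'n::finite mat) = complex_of_real r *c A"
  by (simp add: vec_eq_iff) (simp add: scaleR_conv_of_real)

lemma bounded_linear_cscale: "bounded_linear (\<lambda>z::complex. z *c (A::'n::finite mat))"
proof -
  have "linear (\<lambda>z::complex. z *c A)"
    by (rule linearI) (simp_all add: vec_eq_iff distrib_right)
  then show ?thesis
    using linear_conv_bounded_linear by blast
qed

lemma matrix_mult_cscale_left: "(c *c A) ** B = c *c (A ** B)"
  by (simp add: vec_eq_iff matrix_matrix_mult_def sum_distrib_left mult.assoc)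

lemma matrix_mult_cscale_right: "A ** (c *c B) = c *c (A ** B)"
  by (simp add: vec_eq_iff matrix_matrix_mult_def sum_distrib_left mult.left_commute)

lemma matrix_mult_sum_left: "(\<Sum>i\<in>S. A i) ** (B::'n::finite mat) = (\<Sum>i\<in>S. A i ** B)"
  by (induct S rule: infinite_finite_induct)
    (simp_all add: vec_eq_iff matrix_matrix_mult_def distrib_right sum.distrib)

lemma matrix_mult_sum_right: "(B::'n::finite mat) ** (\<Sum>i\<in>S. A i) = (\<Sum>i\<in>S. B ** A i)"
  by (induct S rule: infinite_finite_induct) (simp_all add: matrix_add_ldistrib)

lemma matrix_mult_sums:
  "(\<Sum>a\<in>A. x a *c M a) ** (\<Sum>b\<in>B. z b *c (N b :: 'n::finite mat))
   = (\<Sum>a\<in>A. \<Sum>b\<in>B. (x a * z b) *c (M a ** N b))"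
  by (simp only: matrix_mult_sum_left matrix_mult_cscale_left)
    (simp only: matrix_mult_sum_right matrix_mult_cscale_right cscale_sum cscale_cscale)

lemma matrix_mult_double_sums:
  "(\<Sum>a\<in>A. \<Sum>b\<in>B. x a b *c M a b) ** (\<Sum>c\<in>C. \<Sum>e\<in>E. z c e *c (N c e :: 'n::finite mat))
   = (\<Sum>a\<in>A. \<Sum>b\<in>B. \<Sum>c\<in>C. \<Sum>e\<in>E. (x a b * z c e) *c (M a b ** N c e))"
  by (simp only: matrix_mult_sum_left matrix_mult_cscale_left)
    (simp only: matrix_mult_sum_right matrix_mult_cscale_right cscale_sum cscale_cscale)

lemma trace_cscale: "trace (c *c A) = c * trace A"
  by (simp add: trace_def sum_distrib_left)

lemma trace_sum: "trace (\<Sum>i\<in>S. A i :: 'n::finite mat) = (\<Sum>i\<in>S. trace (A i))"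
  by (induct S rule: infinite_finite_induct) (simp_all add: trace_add trace_0[simplified])

lemma trace_adj_mult: "trace (adj A ** B) = (\<Sum>k\<in>UNIV. \<Sum>l\<in>UNIV. cnj (A $ l $ k) * B $ l $ k)"
  by (simp add: trace_def matrix_matrix_mult_def)

lemma adj_cscale: "adj (c *c A) = cnj c *c adj A"
  by (simp add: vec_eq_iff)

lemma adj_matrix_mult: "adj (A ** B) = adj B ** adj A"
  by (simp add: vec_eq_iff matrix_matrix_mult_def mult.commute)

lemma adj_adj [simp]: "adj (adj A) = A"
  by (simp add: vec_eq_iff)

lemma adj_sum: "adj (\<Sum>i\<in>S. A i) = (\<Sum>i\<in>S. adj (A i))"
  by (induct S rule: infinite_finite_induct) (simp_all add: vec_eq_iff)

lemma hs_inner_self: "hs_inner A A = complex_of_real (\<Sum>k\<in>UNIV. \<Sum>l\<in>UNIV. (cmod (A $ l $ k))\<^sup>2)"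
proof -
  have "hs_inner A A = (\<Sum>k\<in>UNIV. \<Sum>l\<in>UNIV. A $ l $ k * cnj (A $ l $ k))"
    by (simp add: hs_inner_def trace_adj_mult mult.commute)
  then show ?thesis
    by (simp only: of_real_sum complex_norm_square)
qed

lemma hs_inner_self_eq_0_iff: "hs_inner A A = 0 \<longleftrightarrow> A = 0"
  unfolding hs_inner_self of_real_eq_0_iff by (auto simp: sum_nonneg sum_nonneg_eq_0_iff vec_eq_iff)

lemma Re_hs_inner_self_nonneg: "0 \<le> Re (hs_inner A A)"
  by (simp add: hs_inner_self sum_nonneg)

lemma mat_pow_Suc_0 [simp]: "mat_pow A (Suc 0) = A"
  by (simp add: mat_pow_def)

lemma mat_pow_2: "mat_pow A 2 = A ** A"
  by (simp add: mat_pow_def numeral_2_eq_2)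

section \<open>Norms on \<open>V(G)\<close>\<close>

lemma cnj_mult_self: "cnj w * w = complex_of_real ((cmod w)\<^sup>2)"
  by (metis complex_norm_square mult.commute)

lemma vinner_self:
  fixes f :: "'g::finite \<Rightarrow> complex"
  shows "vinner f f = complex_of_real ((\<Sum>g\<in>UNIV. (cmod (f g))\<^sup>2) / real CARD('g))"
  by (simp add: vinner_def cnj_mult_self)

lemma vnorm2_eq: "vnorm 2 (f::'g::finite \<Rightarrow> complex) = sqrt ((\<Sum>g\<in>UNIV. (cmod (f g))\<^sup>2) / real CARD('g))"
  by (simp add: vnorm_def powr_half_sqrt sum_nonneg)

lemma vnorm4_eq: "vnorm 4 (f::'g::finite \<Rightarrow> complex) = ((\<Sum>g\<in>UNIV. (cmod (f g))^4) / real CARD('g)) powr (1/4)"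
  by (simp add: vnorm_def)

lemma vnorm2_pos: "f g \<noteq> 0 \<Longrightarrow> 0 < vnorm 2 (f::'g::finite \<Rightarrow> complex)"
  unfolding vnorm2_eq by (intro real_sqrt_gt_zero divide_pos_pos sum_pos2[of UNIV g]) auto

lemma norm_le_vnorm2: "cmod (f h) \<le> sqrt (real CARD('g)) * vnorm 2 (f::'g::finite \<Rightarrow> complex)"
proof -
  have "(cmod (f h))\<^sup>2 \<le> (\<Sum>g\<in>UNIV. (cmod (f g))\<^sup>2)"
    by (rule member_le_sum) auto
  then have "cmod (f h) \<le> sqrt (\<Sum>g\<in>UNIV. (cmod (f g))\<^sup>2)"
    by (simp add: real_le_rsqrt)
  then show ?thesis
    by (simp add: vnorm2_eq real_sqrt_mult[symmetric])
qed

lemma vnorm4_le: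
  assumes "\<And>g. cmod (h g) \<le> B"
  shows "vnorm 4 (h::'g::finite \<Rightarrow> complex) \<le> B"
proof -
  have "0 \<le> B"
    using assms[of undefined] norm_ge_zero order.trans by blast
  have "(\<Sum>g\<in>UNIV. (cmod (h g))^4) \<le> (\<Sum>g\<in>(UNIV::'g set). B^4)"
    by (intro sum_mono power_mono assms) simp
  then have "(\<Sum>g\<in>UNIV. (cmod (h g))^4) / real CARD('g) \<le> B^4"
    by (simp add: divide_le_eq mult.commute)
  then have "vnorm 4 h \<le> (B^4) powr (1/4)"
    unfolding vnorm4_eq by (intro powr_mono2) (auto intro!: divide_nonneg_nonneg sum_nonneg)
  also have "(B^4) powr (1/4) = B"
  proof -
    have "B^4 = B powr 4"
      using \<open>0 \<le> B\<close> by simp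
    then show ?thesis
      using \<open>0 \<le> B\<close> by (simp add: powr_powr del: powr_numeral)
  qed
  finally show ?thesis .
qed

section \<open>Almost commuting unitary bases\<close>

definition basis_comb :: "('g::finite \<Rightarrow> 'n::finite mat) \<Rightarrow> ('g \<Rightarrow> complex) \<Rightarrow> 'n mat" where
  "basis_comb U x = (\<Sum>i\<in>UNIV. x i *c U i)"

definition additive_energy :: "('g::{finite,ab_group_add} \<Rightarrow> real) \<Rightarrow> real" where
  "additive_energy w =
     (\<Sum>a\<in>UNIV. \<Sum>b\<in>UNIV. \<Sum>c\<in>UNIV. \<Sum>e\<in>UNIV. if a + c = b + e then w a * w b * w c * w e else 0)"

lemma additive_energy_nonneg: "(\<And>i. 0 \<le> w i) \<Longrightarrow> 0 \<le> additive_energy w"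
  unfolding additive_energy_def by (intro sum_nonneg) auto

lemma adj_basis_comb: "adj (basis_comb U x) = (\<Sum>i\<in>UNIV. cnj (x i) *c adj (U i))"
  by (simp add: basis_comb_def adj_sum adj_cscale)

locale almost_commuting_basis =
  fixes U :: "'g::{finite,ab_group_add} \<Rightarrow> 'n::finite mat"
  assumes acu: "acu_basis U"
begin

lemma basis_zero: "U 0 = mat 1"
  using acu by (simp add: acu_basis_def)

lemma basis_orthogonal: "trace (adj (U i) ** U j) = (if i = j then of_nat CARD('n) else 0)"
  using acu by (simp add: acu_basis_def)

lemma basis_unitary: "adj (U i) ** U i = mat 1" "U i ** adj (U i) = mat 1"
  using acu by (simp_all add: acu_basis_def unitary_mat_def)

lemma basis_mult: "\<exists>\<phi>. cmod \<phi> = 1 \<and> U i ** U j = \<phi> *c U (i + j)"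
  using acu by (simp add: acu_basis_def)

lemma card_group: "CARD('g) = CARD('n)\<^sup>2"
  using acu by (simp add: acu_basis_def)

lemma basis_nonzero: "U i \<noteq> 0"
  using basis_orthogonal[of i i] by (auto simp: trace_def)

lemma adj_basis: "\<exists>\<psi>. cmod \<psi> = 1 \<and> adj (U c) = \<psi> *c U (- c)"
proof -
  obtain \<phi> where \<phi>: "cmod \<phi> = 1" "U c ** U (- c) = \<phi> *c U (c + - c)"
    using basis_mult by blast
  have "U (- c) = adj (U c) ** (U c ** U (- c))"
    by (simp add: matrix_mul_assoc basis_unitary)
  also have "\<dots> = \<phi> *c adj (U c)"
    using \<phi> by (simp add: basis_zero matrix_mult_cscale_right)
  finally have "adj (U c) = (1 / \<phi>) *c U (- c)"
    using \<phi>(1) by (auto simp: cscale_cscale)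
  moreover have "cmod (1 / \<phi>) = 1"
    using \<phi>(1) by (simp add: norm_divide)
  ultimately show ?thesis by blast
qed

lemma basis_triple_mult: "\<exists>\<omega>. cmod \<omega> = 1 \<and> (U b ** adj (U c)) ** U e = \<omega> *c U (b - c + e)"
proof -
  obtain \<psi> where \<psi>: "cmod \<psi> = 1" "adj (U c) = \<psi> *c U (- c)"
    using adj_basis by blast
  obtain \<phi>1 where \<phi>1: "cmod \<phi>1 = 1" "U b ** U (- c) = \<phi>1 *c U (b + - c)"
    using basis_mult by blast
  obtain \<phi>2 where \<phi>2: "cmod \<phi>2 = 1" "U (b + - c) ** U e = \<phi>2 *c U (b + - c + e)"
    using basis_mult by blast
  have "(U b ** adj (U c)) ** U e = (\<psi> * \<phi>1 * \<phi>2) *c U (b - c + e)"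
    using \<psi> \<phi>1 \<phi>2 by (simp add: matrix_mult_cscale_left matrix_mult_cscale_right cscale_cscale mult_ac)
  moreover have "cmod (\<psi> * \<phi>1 * \<phi>2) = 1"
    using \<psi> \<phi>1 \<phi>2 by (simp add: norm_mult)
  ultimately show ?thesis by blast
qed

lemma norm_trace_basis_quadruple:
  "cmod (trace (adj (U a) ** ((U b ** adj (U c)) ** U e))) = (if a + c = b + e then real CARD('n) else 0)"
proof -
  obtain \<omega> where \<omega>: "cmod \<omega> = 1" "(U b ** adj (U c)) ** U e = \<omega> *c U (b - c + e)"
    using basis_triple_mult by blast
  have "a = b - c + e \<longleftrightarrow> a + c = b + e"
    by (metis add.commute add_diff_cancel_left' diff_add_eq)
  then show ?thesis
    using \<omega> by (simp add: matrix_mult_cscale_right trace_cscale basis_orthogonal norm_mult)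
qed

text \<open>Completeness of the basis: the \<open>d\<^sup>2 \<times> d\<^sup>2\<close> matrix with the vectorised \<open>U g\<close> as columns is
  \<open>\<surd>d\<close> times a unitary, so its rows are orthogonal as well.\<close>

lemma basis_entries_orthogonal:
  "(\<Sum>g\<in>UNIV. U g $ k $ l * cnj (U g $ k' $ l')) = (if k = k' \<and> l = l' then of_nat CARD('n) else 0)"
proof -
  have "card (UNIV::'g set) = card (UNIV::('n \<times> 'n) set)"
    using card_group by (simp add: UNIV_Times_UNIV[symmetric] card_cartesian_product power2_eq_square
        del: UNIV_Times_UNIV)
  then obtain \<pi> :: "'g \<Rightarrow> 'n \<times> 'n" where \<pi>: "bij_betw \<pi> UNIV UNIV"
    using bij_betw_iff_card[of "UNIV::'g set" "UNIV::('n \<times> 'n) set"] by auto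
  define d :: complex where "d = of_nat CARD('n)"
  have "d \<noteq> 0" by (simp add: d_def)
  define M where "M = (\<chi> r g. U g $ fst (\<pi> r) $ snd (\<pi> r))"
  define M' where "M' = (\<chi> g r. cnj (M $ r $ g) / d)"
  have "(M' ** M) $ g $ g' = mat 1 $ g $ g'" for g g'
  proof -
    have "(M' ** M) $ g $ g' = (\<Sum>r\<in>UNIV. (\<lambda>p. cnj (U g $ fst p $ snd p) * U g' $ fst p $ snd p) (\<pi> r)) / d"
      by (simp add: M'_def M_def matrix_matrix_mult_def sum_divide_distrib)
    also have "\<dots> = (\<Sum>p\<in>UNIV. cnj (U g $ fst p $ snd p) * U g' $ fst p $ snd p) / d"
      using sum.reindex_bij_betw[OF \<pi>, of "\<lambda>p. cnj (U g $ fst p $ snd p) * U g' $ fst p $ snd p"] by simp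
    also have "\<dots> = (\<Sum>a\<in>UNIV. \<Sum>b\<in>UNIV. cnj (U g $ a $ b) * U g' $ a $ b) / d"
      by (simp add: UNIV_Times_UNIV[symmetric] sum.cartesian_product split_def del: UNIV_Times_UNIV)
    also have "\<dots> = trace (adj (U g) ** U g') / d"
      unfolding trace_adj_mult by (subst (2) sum.swap) (rule refl)
    also have "\<dots> = mat 1 $ g $ g'"
      using \<open>d \<noteq> 0\<close> by (simp add: basis_orthogonal mat_def d_def)
    finally show ?thesis .
  qed
  then have "M ** M' = mat 1"
    using matrix_left_right_inverse by (metis vec_eq_iff)
  moreover obtain r r' where r: "\<pi> r = (k, l)" "\<pi> r' = (k', l')"
    by (meson \<pi> bij_betw_iff_bijections iso_tuple_UNIV_I)
  moreover have "(M ** M') $ r $ r' = (\<Sum>g\<in>UNIV. U g $ k $ l * cnj (U g $ k' $ l')) / d"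
    by (simp add: M'_def M_def matrix_matrix_mult_def sum_divide_distrib r)
  moreover have "r = r' \<longleftrightarrow> k = k' \<and> l = l'"
    using r bij_betw_imp_inj_on[OF \<pi>] by (metis UNIV_I inj_on_def prod.inject)
  ultimately show ?thesis
    using \<open>d \<noteq> 0\<close> by (auto simp: mat_def d_def split: if_splits)
qed

lemma basis_expansion: "X = basis_comb U (\<lambda>i. hs_inner (U i) X / of_nat CARD('n))"
proof -
  have "basis_comb U (\<lambda>i. hs_inner (U i) X / of_nat CARD('n)) $ k $ l = X $ k $ l" for k l
  proof -
    have "basis_comb U (\<lambda>i. hs_inner (U i) X / of_nat CARD('n)) $ k $ l
       = (\<Sum>p\<in>UNIV. \<Sum>q\<in>UNIV. X $ q $ p * (\<Sum>i\<in>UNIV. U i $ k $ l * cnj (U i $ q $ p)) / of_nat CARD('n))"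
      by (simp add: basis_comb_def hs_inner_def trace_adj_mult sum_divide_distrib sum_distrib_left
          sum.swap[of _ "UNIV::'g set"] mult_ac)
    also have "\<dots> = (\<Sum>p\<in>UNIV. \<Sum>q\<in>UNIV. if k = q \<and> l = p then X $ q $ p else 0)"
      unfolding basis_entries_orthogonal by (intro sum.cong refl) auto
    also have "\<dots> = (\<Sum>p\<in>UNIV. if l = p then X $ k $ p else 0)"
      by (rule sum.cong) auto
    also have "\<dots> = X $ k $ l"
      by simp
    finally show ?thesis .
  qed
  then show ?thesis by (simp add: vec_eq_iff)
qed

lemma trace_adj_basis_comb_self:
  "trace (adj (basis_comb U x) ** basis_comb U x) = of_nat CARD('n) * of_real (\<Sum>i\<in>UNIV. (cmod (x i))\<^sup>2)"
proof -
  have "trace (adj (basis_comb U x) ** basis_comb U x)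
      = (\<Sum>a\<in>UNIV. \<Sum>b\<in>UNIV. (cnj (x a) * x b) * trace (adj (U a) ** U b))"
    unfolding adj_basis_comb by (simp only: basis_comb_def matrix_mult_sums trace_sum trace_cscale)
  also have "\<dots> = (\<Sum>a\<in>UNIV. of_nat CARD('n) * (x a * cnj (x a)))"
    by (simp add: basis_orthogonal if_distrib if_distribR mult_ac cong: if_cong)
  also have "\<dots> = of_nat CARD('n) * of_real (\<Sum>i\<in>UNIV. (cmod (x i))\<^sup>2)"
    by (simp only: of_real_sum complex_norm_square sum_distrib_left)
  finally show ?thesis .
qed

lemma norm_trace_basis_comb_fourth_power:
  "cmod (trace ((adj (basis_comb U y) ** basis_comb U y) ** (adj (basis_comb U y) ** basis_comb U y)))
    \<le> real CARD('n) * additive_energy (\<lambda>i. cmod (y i))"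
proof -
  let ?Q = "\<lambda>a b c e. trace (adj (U a) ** ((U b ** adj (U c)) ** U e))"
  have "trace ((adj (basis_comb U y) ** basis_comb U y) ** (adj (basis_comb U y) ** basis_comb U y)) =
     (\<Sum>a\<in>UNIV. \<Sum>b\<in>UNIV. \<Sum>c\<in>UNIV. \<Sum>e\<in>UNIV. (cnj (y a) * y b * (cnj (y c) * y e)) *
        trace ((adj (U a) ** U b) ** (adj (U c) ** U e)))"
    unfolding adj_basis_comb
    by (simp only: basis_comb_def matrix_mult_sums matrix_mult_double_sums trace_sum trace_cscale)
  also have "\<dots> = (\<Sum>a\<in>UNIV. \<Sum>b\<in>UNIV. \<Sum>c\<in>UNIV. \<Sum>e\<in>UNIV. (cnj (y a) * y b * (cnj (y c) * y e)) * ?Q a b c e)"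
    by (simp add: matrix_mul_assoc)
  finally have "cmod (trace ((adj (basis_comb U y) ** basis_comb U y) ** (adj (basis_comb U y) ** basis_comb U y)))
     \<le> (\<Sum>a\<in>UNIV. \<Sum>b\<in>UNIV. \<Sum>c\<in>UNIV. \<Sum>e\<in>UNIV. cmod ((cnj (y a) * y b * (cnj (y c) * y e)) * ?Q a b c e))"
    by (simp only:) (intro order.trans[OF norm_sum] sum_mono; simp)+
  also have "\<dots> = real CARD('n) * additive_energy (\<lambda>i. cmod (y i))"
    by (simp add: additive_energy_def sum_distrib_left norm_mult norm_trace_basis_quadruple
        if_distrib if_distribR mult_ac cong: if_cong)
  finally show ?thesis .
qed

lemma schatten_norm_even_1_basis_comb:
  "schatten_norm_even 1 (basis_comb U x) = sqrt (\<Sum>i\<in>UNIV. (cmod (x i))\<^sup>2)"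
proof -
  let ?s = "\<Sum>i\<in>UNIV. (cmod (x i))\<^sup>2"
  let ?d = "real CARD('n)"
  have "0 \<le> ?s" by (simp add: sum_nonneg)
  have "schatten_norm_even 1 (basis_comb U x) = ?d powr (-1/2) * (?d * ?s) powr (1/2)"
    by (simp add: schatten_norm_even_def trace_adj_basis_comb_self)
  also have "\<dots> = (?d powr (-1/2) * ?d powr (1/2)) * ?s powr (1/2)"
    using \<open>0 \<le> ?s\<close> by (simp add: powr_mult)
  also have "?d powr (-1/2) * ?d powr (1/2) = 1"
    by (simp add: powr_add[symmetric])
  finally show ?thesis
    using \<open>0 \<le> ?s\<close> by (simp add: powr_half_sqrt)
qed

lemma schatten_norm_even_2_basis_comb_le:
  "schatten_norm_even 2 (basis_comb U y) \<le> additive_energy (\<lambda>i. cmod (y i)) powr (1/4)"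
proof -
  let ?E = "additive_energy (\<lambda>i. cmod (y i))"
  let ?d = "real CARD('n)"
  let ?B = "adj (basis_comb U y) ** basis_comb U y"
  have "0 \<le> ?E"
    by (rule additive_energy_nonneg) simp
  have "adj ?B = ?B"
    by (simp add: adj_matrix_mult)
  then have "0 \<le> Re (trace (?B ** ?B))"
    using Re_hs_inner_self_nonneg[of ?B] by (simp add: hs_inner_def)
  moreover have "Re (trace (?B ** ?B)) \<le> ?d * ?E"
    using complex_Re_le_cmod[of "trace (?B ** ?B)"] norm_trace_basis_comb_fourth_power[of y] by linarith
  ultimately have "schatten_norm_even 2 (basis_comb U y) \<le> ?d powr (-1/4) * (?d * ?E) powr (1/4)"
    by (simp add: schatten_norm_even_def mat_pow_2 powr_mono2)
  also have "\<dots> = (?d powr (-1/4) * ?d powr (1/4)) * ?E powr (1/4)"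
    using \<open>0 \<le> ?E\<close> by (simp add: powr_mult)
  also have "?d powr (-1/4) * ?d powr (1/4) = 1"
    by (simp add: powr_add[symmetric])
  finally show ?thesis
    by simp
qed

end

section \<open>Characters\<close>

lemma sum_swap_innermost3:
  "(\<Sum>g\<in>G. \<Sum>a\<in>A. \<Sum>b\<in>B. f a b g) = (\<Sum>a\<in>A. \<Sum>b\<in>B. \<Sum>g\<in>G. f a b g :: 'z::comm_monoid_add)"
  by (simp add: sum.swap[of _ G])

lemma sum_swap_innermost5:
  "(\<Sum>g\<in>G. \<Sum>a\<in>A. \<Sum>b\<in>B. \<Sum>c\<in>C. \<Sum>e\<in>E. f a b c e g)
   = (\<Sum>a\<in>A. \<Sum>b\<in>B. \<Sum>c\<in>C. \<Sum>e\<in>E. \<Sum>g\<in>G. f a b c e g :: 'z::comm_monoid_add)"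
  by (simp add: sum.swap[of _ G])

definition char_comb :: "('g::finite \<Rightarrow> 'g \<Rightarrow> complex) \<Rightarrow> ('g \<Rightarrow> complex) \<Rightarrow> 'g \<Rightarrow> complex" where
  "char_comb chi z = (\<lambda>g. \<Sum>i\<in>UNIV. z i * chi i g)"

locale char_isomorphism =
  fixes chi :: "'g::{finite,ab_group_add} \<Rightarrow> 'g \<Rightarrow> complex"
  assumes ci: "char_iso chi"
begin

lemma chi_add: "chi (i + j) g = chi i g * chi j g"
  using ci by (simp add: char_iso_def)

lemma chi_mult: "chi i (a + b) = chi i a * chi i b" and chi_nonzero: "chi i a \<noteq> 0"
  using ci by (simp_all add: char_iso_def character_def)

lemma chi_zero: "chi 0 g = 1"
  using chi_add[of 0 0 g] chi_nonzero[of 0 g] by simp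

lemma chi_eq_chi_zero_iff: "chi k = chi 0 \<longleftrightarrow> k = 0"
  using ci unfolding char_iso_def by metis

lemma norm_chi: "cmod (chi i g) = 1"
proof -
  let ?P = "\<Prod>h\<in>UNIV. chi i h"
  have "?P \<noteq> 0"
    using chi_nonzero by simp
  have "bij_betw ((+) g) UNIV UNIV" by simp
  then have "(\<Prod>h\<in>UNIV. chi i (g + h)) = ?P"
    using prod.reindex_bij_betw by blast
  moreover have "(\<Prod>h\<in>UNIV. chi i (g + h)) = chi i g ^ CARD('g) * ?P"
    by (simp add: chi_mult prod.distrib)
  ultimately have "chi i g ^ CARD('g) = 1"
    using \<open>?P \<noteq> 0\<close> by simp
  then show ?thesis
    using power_eq_1_iff by fastforce
qed

lemma chi_uminus: "chi (- a) g = cnj (chi a g)"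
proof -
  have "chi (- a) g * chi a g = 1"
    using chi_add[of "- a" a g] by (simp add: chi_zero)
  moreover have "cnj (chi a g) * chi a g = 1"
    using complex_norm_square[of "chi a g"] norm_chi[of a g] by (simp add: mult.commute)
  ultimately show ?thesis
    using chi_nonzero[of a g] by (metis mult_right_cancel)
qed

lemma cnj_chi_mult: "cnj (chi a g) * chi b g = chi (b - a) g"
  by (simp add: chi_uminus[symmetric] chi_add[symmetric] mult.commute)

text \<open>A nontrivial character takes a value \<open>\<noteq> 1\<close> at some \<open>h\<close>, and translating by \<open>h\<close>
  multiplies the sum by that value.\<close>

lemma sum_chi: "(\<Sum>g\<in>UNIV. chi k g) = (if k = 0 then of_nat CARD('g) else 0)"
proof (cases "k = 0")
  case True
  then show ?thesis by (simp add: chi_zero)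
next
  case False
  then obtain h where "chi k h \<noteq> chi 0 h"
    using chi_eq_chi_zero_iff by (meson ext)
  then have h: "chi k h \<noteq> 1"
    by (simp add: chi_zero)
  let ?S = "\<Sum>g\<in>UNIV. chi k g"
  have "bij_betw ((+) h) UNIV UNIV" by simp
  then have "(\<Sum>g\<in>UNIV. chi k (h + g)) = ?S"
    using sum.reindex_bij_betw by blast
  moreover have "(\<Sum>g\<in>UNIV. chi k (h + g)) = chi k h * ?S"
    by (simp add: chi_mult sum_distrib_left)
  ultimately have "(chi k h - 1) * ?S = 0"
    by (simp add: algebra_simps)
  then show ?thesis
    using h False by simp
qed

lemma vinner_char_comb: "vinner (char_comb chi z) (char_comb chi w) = (\<Sum>a\<in>UNIV. cnj (z a) * w a)"
proof -
  have "vinner (char_comb chi z) (char_comb chi w) = (1 / of_nat CARD('g)) *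
     (\<Sum>g\<in>UNIV. \<Sum>b\<in>UNIV. \<Sum>a\<in>UNIV. (cnj (z a) * w b) * (cnj (chi a g) * chi b g))"
    by (simp add: vinner_def char_comb_def sum_product mult_ac)
  also have "\<dots> = (1 / of_nat CARD('g)) *
     (\<Sum>b\<in>UNIV. \<Sum>a\<in>UNIV. (cnj (z a) * w b) * (\<Sum>g\<in>UNIV. chi (b - a) g))"
    using sum_swap_innermost3[where f = "\<lambda>b a g. (cnj (z a) * w b) * (cnj (chi a g) * chi b g)"
        and G = UNIV and A = UNIV and B = UNIV]
    by (simp add: cnj_chi_mult sum_distrib_left)
  also have "\<dots> = (\<Sum>a\<in>UNIV. cnj (z a) * w a)"
    by (simp add: sum_chi sum_distrib_left if_distrib if_distribR cong: if_cong)
  finally show ?thesis .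
qed

lemma fourier_char_comb: "fourier chi (char_comb chi w) j = w j"
proof -
  have "chi j = char_comb chi (\<lambda>i. if i = j then 1 else 0)"
    by (simp add: char_comb_def fun_eq_iff if_distrib if_distribR cong: if_cong)
  then show ?thesis
    by (simp add: fourier_def vinner_char_comb if_distrib if_distribR cong: if_cong)
qed

lemma sum_char_comb_fourth_power:
  "(\<Sum>g\<in>UNIV. cnj (char_comb chi z g) * char_comb chi z g * (cnj (char_comb chi z g) * char_comb chi z g))
     / of_nat CARD('g)
   = (\<Sum>a\<in>UNIV. \<Sum>b\<in>UNIV. \<Sum>c\<in>UNIV. \<Sum>e\<in>UNIV.
       if a + c = b + e then cnj (z a) * z b * (cnj (z c) * z e) else 0)"
proof -
  have "(\<Sum>g\<in>UNIV. cnj (char_comb chi z g) * char_comb chi z g * (cnj (char_comb chi z g) * char_comb chi z g))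
     = (\<Sum>g\<in>UNIV. \<Sum>a\<in>UNIV. \<Sum>c\<in>UNIV. \<Sum>b\<in>UNIV. \<Sum>e\<in>UNIV.
        (cnj (z a) * z b * (cnj (z c) * z e)) * chi (b - a + (e - c)) g)"
    by (simp add: char_comb_def sum_product sum_distrib_left sum_distrib_right chi_add
        cnj_chi_mult[symmetric] mult_ac)
  also have "\<dots> = (\<Sum>a\<in>UNIV. \<Sum>c\<in>UNIV. \<Sum>b\<in>UNIV. \<Sum>e\<in>UNIV.
        (cnj (z a) * z b * (cnj (z c) * z e)) * (\<Sum>g\<in>UNIV. chi (b - a + (e - c)) g))"
    using sum_swap_innermost5[where f = "\<lambda>a c b e g. (cnj (z a) * z b * (cnj (z c) * z e)) * chi (b - a + (e - c)) g"
        and G = UNIV and A = UNIV and B = UNIV and C = UNIV and E = UNIV]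
    by (simp add: sum_distrib_left)
  also have "\<dots> = of_nat CARD('g) * (\<Sum>a\<in>UNIV. \<Sum>c\<in>UNIV. \<Sum>b\<in>UNIV. \<Sum>e\<in>UNIV.
       if a + c = b + e then cnj (z a) * z b * (cnj (z c) * z e) else 0)"
    unfolding sum_chi sum_distrib_left
    by (intro sum.cong refl) (auto simp: algebra_simps eq_neg_iff_add_eq_0)
  also have "\<dots> = of_nat CARD('g) * (\<Sum>a\<in>UNIV. \<Sum>b\<in>UNIV. \<Sum>c\<in>UNIV. \<Sum>e\<in>UNIV.
       if a + c = b + e then cnj (z a) * z b * (cnj (z c) * z e) else 0)"
    by (intro arg_cong[where f = "\<lambda>s. of_nat CARD('g) * s"] sum.cong refl sum.swap)
  finally show ?thesis
    by simp
qed

lemma vnorm2_char_comb: "vnorm 2 (char_comb chi z) = sqrt (\<Sum>i\<in>UNIV. (cmod (z i))\<^sup>2)"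
proof -
  have "vinner (char_comb chi z) (char_comb chi z) = complex_of_real (\<Sum>i\<in>UNIV. (cmod (z i))\<^sup>2)"
    by (simp add: vinner_char_comb cnj_mult_self)
  then have "(\<Sum>g\<in>UNIV. (cmod (char_comb chi z g))\<^sup>2) / real CARD('g) = (\<Sum>i\<in>UNIV. (cmod (z i))\<^sup>2)"
    unfolding vinner_self of_real_eq_iff .
  then show ?thesis
    by (simp add: vnorm2_eq)
qed

lemma vnorm4_char_comb:
  assumes "\<And>i. 0 \<le> w i"
  shows "vnorm 4 (char_comb chi (\<lambda>i. complex_of_real (w i))) = additive_energy w powr (1/4)"
proof -
  let ?F = "char_comb chi (\<lambda>i. complex_of_real (w i))"
  have "complex_of_real ((cmod (?F g))^4) = cnj (?F g) * ?F g * (cnj (?F g) * ?F g)" for g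
    by (simp add: complex_norm_square[symmetric] power4_eq_xxxx power2_eq_square mult_ac)
  then have "complex_of_real ((\<Sum>g\<in>UNIV. (cmod (?F g))^4) / real CARD('g))
      = (\<Sum>g\<in>UNIV. cnj (?F g) * ?F g * (cnj (?F g) * ?F g)) / of_nat CARD('g)"
    by simp
  also have "\<dots> = complex_of_real (additive_energy w)"
    unfolding sum_char_comb_fourth_power additive_energy_def
    by (simp add: if_distrib if_distribR mult_ac cong: if_cong)
  finally show ?thesis
    unfolding vnorm4_eq of_real_eq_iff by simp
qed

lemma norm_fourier_le: "cmod (fourier chi f i) \<le> sqrt (real CARD('g)) * vnorm 2 f"
proof -
  let ?v = "sqrt (real CARD('g)) * vnorm 2 f"
  have "cmod (fourier chi f i) = cmod (\<Sum>g\<in>UNIV. cnj (chi i g) * f g) / real CARD('g)"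
    by (simp add: fourier_def vinner_def norm_mult norm_divide)
  also have "\<dots> \<le> (\<Sum>g\<in>UNIV. cmod (f g)) / real CARD('g)"
    by (intro divide_right_mono order.trans[OF norm_sum]) (auto simp: norm_mult norm_chi)
  also have "\<dots> \<le> (\<Sum>g\<in>(UNIV::'g set). ?v) / real CARD('g)"
    by (intro divide_right_mono sum_mono norm_le_vnorm2) auto
  also have "\<dots> = ?v"
    by simp
  finally show ?thesis .
qed

lemma bdd_above_classical_semigroup_ratio:
  "bdd_above ((\<lambda>f. vnorm 4 (classical_semigroup chi lam t f) / vnorm 2 f) ` {f. \<exists>g. f g \<noteq> 0})"
proof (rule bdd_aboveI2)
  let ?K = "(\<Sum>i\<in>UNIV. exp (Re (lam i * of_real t))) * sqrt (real CARD('g))"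
  fix f :: "'g \<Rightarrow> complex"
  assume "f \<in> {f. \<exists>g. f g \<noteq> 0}"
  then have "0 < vnorm 2 f"
    using vnorm2_pos by blast
  have "cmod (classical_semigroup chi lam t f g) \<le> ?K * vnorm 2 f" for g
  proof -
    have "cmod (classical_semigroup chi lam t f g)
        \<le> (\<Sum>i\<in>UNIV. cmod (exp (lam i * of_real t) * fourier chi f i * chi i g))"
      unfolding classical_semigroup_def by (rule norm_sum)
    also have "\<dots> \<le> (\<Sum>i\<in>UNIV. exp (Re (lam i * of_real t)) * (sqrt (real CARD('g)) * vnorm 2 f))"
      by (intro sum_mono) (auto simp: norm_mult norm_chi norm_exp_eq_Re intro!: mult_left_mono norm_fourier_le)
    also have "\<dots> = ?K * vnorm 2 f"
      by (simp add: sum_distrib_left sum_distrib_right mult_ac)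
    finally show ?thesis .
  qed
  then have "vnorm 4 (classical_semigroup chi lam t f) \<le> ?K * vnorm 2 f"
    by (rule vnorm4_le)
  then show "vnorm 4 (classical_semigroup chi lam t f) / vnorm 2 f \<le> ?K"
    using \<open>0 < vnorm 2 f\<close> by (simp add: pos_divide_le_eq)
qed

lemma classical_semigroup_char_comb:
  "classical_semigroup chi lam t (char_comb chi z) = char_comb chi (\<lambda>i. z i * exp (lam i * of_real t))"
  unfolding classical_semigroup_def fourier_char_comb by (simp add: char_comb_def mult_ac)

lemma classical_semigroup_char_comb_norm:
  assumes "\<And>i. lam i \<in> \<real>"
  shows "classical_semigroup chi lam t (char_comb chi (\<lambda>i. complex_of_real (cmod (x i))))
         = char_comb chi (\<lambda>i. complex_of_real (cmod (x i * exp (lam i * of_real t))))"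
proof -
  have "complex_of_real (cmod (x i)) * exp (lam i * of_real t)
      = complex_of_real (cmod (x i * exp (lam i * of_real t)))" for i
  proof -
    obtain r where "lam i = of_real r"
      using assms Reals_cases by blast
    then show ?thesis
      by (simp add: exp_of_real[symmetric] norm_mult)
  qed
  then show ?thesis
    by (simp add: classical_semigroup_char_comb)
qed

end

section \<open>The two semigroups\<close>

lemma complex_linear_map_sum:
  assumes "complex_linear_map L"
  shows "L (\<Sum>i\<in>S. A i) = (\<Sum>i\<in>S. L (A i))"
proof -
  have "L (0 *c X) = 0 *c L X" for X
    using assms unfolding complex_linear_map_def by blast
  then have "L 0 = 0"
    by simp
  then show ?thesis
    using assms by (induct S rule: infinite_finite_induct) (simp_all add: complex_linear_map_def)
qed

lemma funpow_basis_comb: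
  assumes "complex_linear_map L" and "\<And>i. L (U i) = lam i *c U i"
  shows "(L ^^ n) (basis_comb U x) = basis_comb U (\<lambda>i. x i * lam i ^ n)"
proof (induct n)
  case 0
  then show ?case by simp
next
  case (Suc n)
  have "L (c *c X) = c *c L X" for c X
    using assms(1) by (simp add: complex_linear_map_def)
  with Suc show ?case
    by (simp add: basis_comb_def complex_linear_map_sum[OF assms(1)] assms(2) cscale_cscale mult_ac)
qed

lemma semigroup_basis_comb:
  assumes "complex_linear_map L" and "\<And>i. L (U i) = lam i *c U i"
  shows "semigroup L t (basis_comb U x) = basis_comb U (\<lambda>i. x i * exp (lam i * of_real t))"
proof -
  have "(\<lambda>n. (t ^ n / fact n) *\<^sub>R (L ^^ n) (basis_comb U x)) =
     (\<lambda>n. \<Sum>i\<in>UNIV. (x i * ((of_real t * lam i) ^ n /\<^sub>R fact n)) *c U i)"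
    unfolding funpow_basis_comb[OF assms]
    by (simp add: basis_comb_def scaleR_eq_cscale cscale_sum cscale_cscale fun_eq_iff
        scaleR_conv_of_real power_mult_distrib mult_ac divide_inverse)
  moreover have "(\<lambda>n. \<Sum>i\<in>UNIV. (x i * ((of_real t * lam i) ^ n /\<^sub>R fact n)) *c U i) sums
        (\<Sum>i\<in>UNIV. (x i * exp (of_real t * lam i)) *c U i)"
    using bounded_linear.sums[OF bounded_linear_cscale sums_mult[OF exp_converges]]
    by (intro sums_sum) simp
  ultimately show ?thesis
    unfolding semigroup_def by (simp add: sums_unique[symmetric] basis_comb_def mult.commute)
qed

lemma reversible_eigenvalue_real:
  assumes "reversible L" and "L V = c *c V" and "V \<noteq> 0"
  shows "c \<in> \<real>"
proof -
  have "hs_inner V (L V) = hs_inner (L V) V"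
    using assms(1) by (simp add: reversible_def)
  then have "c * hs_inner V V = cnj c * hs_inner V V"
    using assms(2) by (simp add: hs_inner_def adj_cscale matrix_mult_cscale_left
        matrix_mult_cscale_right trace_cscale)
  then have "cnj c = c"
    using assms(3) by (auto simp: hs_inner_self_eq_0_iff)
  then show ?thesis
    by (simp add: Reals_cnj_iff)
qed

lemma (in char_isomorphism) schatten_ratio_le_norm_2_4_V:
  assumes "almost_commuting_basis U" and "x j \<noteq> 0" and "\<And>i. lam i \<in> \<real>"
  shows "schatten_norm_even 2 (basis_comb U (\<lambda>i. x i * exp (lam i * of_real t)))
           / schatten_norm_even 1 (basis_comb U x)
         \<le> norm_2_4_V (classical_semigroup chi lam t)"
proof -
  interpret almost_commuting_basis U
    by (fact assms(1))
  let ?P = "classical_semigroup chi lam t"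
  define f where "f = char_comb chi (\<lambda>i. complex_of_real (cmod (x i)))"
  have "fourier chi f j \<noteq> 0"
    using assms(2) by (simp add: f_def fourier_char_comb)
  then have "f \<noteq> (\<lambda>_. 0)"
    by (auto simp: fourier_def vinner_def)
  then have "f \<in> {f. \<exists>g. f g \<noteq> 0}"
    by auto
  have "?P f = char_comb chi (\<lambda>i. complex_of_real (cmod (x i * exp (lam i * of_real t))))"
    unfolding f_def using assms(3) by (rule classical_semigroup_char_comb_norm)
  then have "schatten_norm_even 2 (basis_comb U (\<lambda>i. x i * exp (lam i * of_real t))) \<le> vnorm 4 (?P f)"
    using schatten_norm_even_2_basis_comb_le by (simp add: vnorm4_char_comb)
  moreover have "schatten_norm_even 1 (basis_comb U x) = vnorm 2 f"
    unfolding f_def schatten_norm_even_1_basis_comb vnorm2_char_comb by simp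
  moreover have "0 < vnorm 2 f"
    using \<open>f \<in> {f. \<exists>g. f g \<noteq> 0}\<close> vnorm2_pos by blast
  ultimately have "schatten_norm_even 2 (basis_comb U (\<lambda>i. x i * exp (lam i * of_real t)))
           / schatten_norm_even 1 (basis_comb U x) \<le> vnorm 4 (?P f) / vnorm 2 f"
    by (simp add: divide_right_mono)
  also have "\<dots> \<le> norm_2_4_V ?P"
    unfolding norm_2_4_V_def
    by (rule cSUP_upper[OF \<open>f \<in> {f. \<exists>g. f g \<noteq> 0}\<close> bdd_above_classical_semigroup_ratio])
  finally show ?thesis .
qed

theorem mainTheorem19:
  fixes L :: "'n::finite mat \<Rightarrow> 'n mat"
    and U :: "'g::{finite,ab_group_add} \<Rightarrow> 'n mat"
    and lam :: "'g \<Rightarrow> complex"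
    and chi :: "'g \<Rightarrow> 'g \<Rightarrow> complex"
    and t :: real
  assumes "liouvillian L" and "unital L" and "reversible L"
    and "acu_basis U"
    and "\<And>i. L (U i) = lam i *c U i"
    and "char_iso chi"
    and "t \<ge> 0"
  shows "norm_2_4_mat (semigroup L t) \<le> norm_2_4_V (classical_semigroup chi lam t)"
proof -
  interpret almost_commuting_basis U
    using assms(4) by unfold_locales
  interpret char_isomorphism chi
    using assms(6) by unfold_locales
  have linear: "complex_linear_map L"
    using assms(1) by (simp add: liouvillian_def)
  have real: "lam i \<in> \<real>" for i
    using reversible_eigenvalue_real[OF assms(3) assms(5) basis_nonzero] .
  have "schatten_norm_even 2 (semigroup L t X) / schatten_norm_even 1 X
          \<le> norm_2_4_V (classical_semigroup chi lam t)" if "X \<noteq> 0" for X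
  proof -
    define x where "x i = hs_inner (U i) X / of_nat CARD('n)" for i
    have X: "X = basis_comb U x"
      unfolding x_def by (rule basis_expansion)
    with \<open>X \<noteq> 0\<close> obtain j where "x j \<noteq> 0"
      by (force simp: basis_comb_def)
    then show ?thesis
      using schatten_ratio_le_norm_2_4_V[OF almost_commuting_basis_axioms _ real]
      by (simp add: X semigroup_basis_comb[OF linear assms(5)])
  qed
  moreover have "{X :: 'n mat. X \<noteq> 0} \<noteq> {}"
    using basis_nonzero by blast
  ultimately show ?thesis
    unfolding norm_2_4_mat_def by (intro cSUP_least) auto
qed

end
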